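(* Let $1<p<\infty$ and set $\varphi_1(t)=e^{1-\frac1t}$. Then, with constants independent of $f$ and $t$, for all $f\in L^{p)}(\Omega)+L^{(p}(\Omega)$ and all $t\in(0,1)$, $$K\bigl(f,t;L^{p)},L^{(p}\bigr)\approx\sup_{0<s<\varphi_1(t)}(1-\log s)^{-\frac1p}\Bigl(\int_s^{\varphi_1(t)}f_*^p(x)dx\Bigr)^{\frac1p}+t\int_{\varphi_1(t)}^1(1-\log s)^{-\frac1p}\Bigl(\int_{\varphi_1(t)}^s f_*^p(x)dx\Bigr)^{\frac1p}\frac{ds}{s}.$$
   Context: $\Omega\subset\mathbb R^n$ is a bounded open set with $|\Omega|=1$; $f_*$ is the decreasing rearrangement of $|f|$ on $(0,1)$; $\log$ is the natural logarithm. Grand Lebesgue space $L^{p)}(\Omega)$: measurable $f$ with $\|f\|_{p)}=\sup_{0<t<1}(1-\log t)^{-1/p}(\int_t^1 f_*^p)^{1/p}<\infty$. Small Lebesgue space $L^{(p}(\Omega)$: measurable $f$ with $\|f\|_{(p}=\int_0^1(1-\log t)^{-1/p}(\int_0^t f_*^p)^{1/p}\frac{dt}{t}<\infty$. K-functional: $K(g,t;X_0,X_1)=\inf_{g=g_0+g_1}(\|g_0\|_{X_0}+t\|g_1\|_{X_1})$. *)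

theory Defs
  imports "HOL-Analysis.Analysis"
begin

text \<open>Real power of an extended nonnegative real (used only with positive exponents):
  \<infinity> to a positive power is \<infinity>.\<close>
definition enn_powr :: "ennreal \<Rightarrow> real \<Rightarrow> ennreal" where
  "enn_powr x a = (if x = \<infinity> then \<infinity> else ennreal (enn2real x powr a))"

definition drearr :: "'a::euclidean_space set \<Rightarrow> ('a \<Rightarrow> real) \<Rightarrow> real \<Rightarrow> real" where
  "drearr \<Omega> f t = Inf {y. 0 \<le> y \<and> emeasure lebesgue {x\<in>\<Omega>. \<bar>f x\<bar> > y} \<le> ennreal t}"

definition grand_norm :: "real \<Rightarrow> 'a::euclidean_space set \<Rightarrow> ('a \<Rightarrow> real) \<Rightarrow> ennreal" where
  "grand_norm p \<Omega> f = (SUP t\<in>{0<..<1}. ennreal ((1 - ln t) powr (-1/p)) *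
      enn_powr (\<integral>\<^sup>+ x\<in>{t..1}. ennreal (drearr \<Omega> f x powr p) \<partial>lborel) (1/p))"

definition small_norm :: "real \<Rightarrow> 'a::euclidean_space set \<Rightarrow> ('a \<Rightarrow> real) \<Rightarrow> ennreal" where
  "small_norm p \<Omega> f = (\<integral>\<^sup>+ t\<in>{0<..<1}. ennreal ((1 - ln t) powr (-1/p) / t) *
      enn_powr (\<integral>\<^sup>+ x\<in>{0..t}. ennreal (drearr \<Omega> f x powr p) \<partial>lborel) (1/p) \<partial>lborel)"

definition in_grand :: "real \<Rightarrow> 'a::euclidean_space set \<Rightarrow> ('a \<Rightarrow> real) \<Rightarrow> bool" where
  "in_grand p \<Omega> g \<longleftrightarrow> g \<in> borel_measurable lebesgue \<and> grand_norm p \<Omega> g < \<infinity>"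

definition in_small :: "real \<Rightarrow> 'a::euclidean_space set \<Rightarrow> ('a \<Rightarrow> real) \<Rightarrow> bool" where
  "in_small p \<Omega> g \<longleftrightarrow> g \<in> borel_measurable lebesgue \<and> small_norm p \<Omega> g < \<infinity>"

definition in_sum_space :: "real \<Rightarrow> 'a::euclidean_space set \<Rightarrow> ('a \<Rightarrow> real) \<Rightarrow> bool" where
  "in_sum_space p \<Omega> f \<longleftrightarrow> (\<exists>g0 g1. in_grand p \<Omega> g0 \<and> in_small p \<Omega> g1 \<and>
      (\<forall>x\<in>\<Omega>. f x = g0 x + g1 x))"

definition Kfun :: "real \<Rightarrow> 'a::euclidean_space set \<Rightarrow> ('a \<Rightarrow> real) \<Rightarrow> real \<Rightarrow> ennreal" where
  "Kfun p \<Omega> f t = (INF (g0, g1)\<in>{(g0, g1). in_grand p \<Omega> g0 \<and> in_small p \<Omega> g1 \<and>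
      (\<forall>x\<in>\<Omega>. f x = g0 x + g1 x)}. grand_norm p \<Omega> g0 + ennreal t * small_norm p \<Omega> g1)"

definition phi1 :: "real \<Rightarrow> real" where
  "phi1 t = exp (1 - 1 / t)"

definition Krhs :: "real \<Rightarrow> 'a::euclidean_space set \<Rightarrow> ('a \<Rightarrow> real) \<Rightarrow> real \<Rightarrow> ennreal" where
  "Krhs p \<Omega> f t =
     (SUP s\<in>{0<..<phi1 t}. ennreal ((1 - ln s) powr (-1/p)) *
        enn_powr (\<integral>\<^sup>+ x\<in>{s..phi1 t}. ennreal (drearr \<Omega> f x powr p) \<partial>lborel) (1/p))
   + ennreal t * (\<integral>\<^sup>+ s\<in>{phi1 t..1}. ennreal ((1 - ln s) powr (-1/p) / s) *
        enn_powr (\<integral>\<^sup>+ x\<in>{phi1 t..s}. ennreal (drearr \<Omega> f x powr p) \<partial>lborel) (1/p) \<partial>lborel)"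

end

theory Submission
  imports Defs
begin

text \<open>
  Write \<open>f\<^sub>*\<close> for the decreasing rearrangement and \<open>\<phi> = \<phi>\<^sub>1(t)\<close>, chosen so that
  \<open>1 - log \<phi> = 1/t\<close>; below \<open>\<phi>\<close> the grand weight \<open>(1 - log s)\<^sup>-\<^sup>1\<^sup>/\<^sup>p\<close> is at most \<open>t\<^sup>1\<^sup>/\<^sup>p\<close>.

  Upper bound: cut \<open>f\<close> at height \<open>\<lambda> = f\<^sub>*(\<phi>)\<close>. The truncation \<open>g\<^sub>1\<close> of \<open>f\<close> to \<open>[-\<lambda>, \<lambda>]\<close> and
  \<open>g\<^sub>0 = f - g\<^sub>1\<close> satisfy \<open>g\<^sub>0\<^sub>* \<le> (f\<^sub>* - \<lambda>)\<^sub>+\<close>, which vanishes beyond \<open>\<phi>\<close>, and \<open>g\<^sub>1\<^sub>* \<le> min f\<^sub>* \<lambda>\<close>.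
  Hence \<open>\<parallel>g\<^sub>0\<parallel>\<^sub>p\<^sub>)\<close> is bounded by the first term of the right-hand side, and \<open>t \<parallel>g\<^sub>1\<parallel>\<^sub>(\<^sub>p\<close> by the
  second term plus a multiple of \<open>\<lambda> (t \<phi>)\<^sup>1\<^sup>/\<^sup>p\<close>, which the first term controls at \<open>s = \<phi>/2\<close>.

  Lower bound: for any decomposition \<open>f = g\<^sub>0 + g\<^sub>1\<close> we have \<open>f\<^sub>*(x) \<le> g\<^sub>0\<^sub>*(x/2) + g\<^sub>1\<^sub>*(x/2)\<close>.
  Splitting both terms of the right-hand side accordingly, the contributions of \<open>g\<^sub>0\<close> are bounded by
  \<open>\<parallel>g\<^sub>0\<parallel>\<^sub>p\<^sub>)\<close> and those of \<open>g\<^sub>1\<close> by \<open>t \<parallel>g\<^sub>1\<parallel>\<^sub>(\<^sub>p\<close>, because \<open>\<integral>\<^sub>c\<^sup>1 (1 - log u)\<^sup>-\<^sup>1\<^sup>/\<^sup>p du/u\<close> grows like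
  \<open>(1 - log c)\<^sup>1\<^sup>-\<^sup>1\<^sup>/\<^sup>p\<close>.
\<close>

section \<open>Decreasing rearrangement\<close>

context
  fixes \<Omega> :: "'a::euclidean_space set"
  assumes sets_\<Omega>: "\<Omega> \<in> sets lebesgue" and finite_\<Omega>: "emeasure lebesgue \<Omega> \<noteq> \<infinity>"
begin

lemma level_set_sets_lebesgue:
  fixes f :: "'a \<Rightarrow> real"
  assumes "f \<in> borel_measurable lebesgue"
  shows "{x\<in>\<Omega>. y < \<bar>f x\<bar>} \<in> sets lebesgue"
proof -
  have "(\<lambda>x. \<bar>f x\<bar>) \<in> borel_measurable lebesgue" using assms by measurable
  then have "{x\<in>space lebesgue. y < \<bar>f x\<bar>} \<in> sets lebesgue"
    by (simp add: borel_measurable_iff_greater)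
  from sets.Int[OF sets_\<Omega> this] show ?thesis
    by (simp add: Int_def conj_commute)
qed

lemma drearr_le:
  assumes "0 \<le> y" "emeasure lebesgue {x\<in>\<Omega>. y < \<bar>f x\<bar>} \<le> ennreal t"
  shows "drearr \<Omega> f t \<le> y"
  unfolding drearr_def by (rule cInf_lower) (use assms in auto)

lemma ex_level_emeasure_le:
  fixes f :: "'a \<Rightarrow> real"
  assumes f: "f \<in> borel_measurable lebesgue" and t: "0 < t"
  shows "\<exists>y\<ge>0. emeasure lebesgue {x\<in>\<Omega>. y < \<bar>f x\<bar>} \<le> ennreal t"
proof -
  define A where "A n = {x\<in>\<Omega>. real n < \<bar>f x\<bar>}" for n :: nat
  have "(INF n. emeasure lebesgue (A n)) = emeasure lebesgue (\<Inter>n. A n)"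
  proof (rule INF_emeasure_decseq)
    show "range A \<subseteq> sets lebesgue" using level_set_sets_lebesgue[OF f] by (auto simp: A_def)
    show "decseq A" unfolding decseq_def A_def by auto
    show "emeasure lebesgue (A i) \<noteq> \<infinity>" for i
      using emeasure_mono[of "A i" \<Omega> lebesgue] sets_\<Omega> finite_\<Omega>
      by (auto simp: A_def top_unique)
  qed
  moreover have "(\<Inter>n. A n) = {}"
  proof -
    have "x \<notin> A (nat \<lceil>\<bar>f x\<bar>\<rceil>)" for x
      using real_nat_ceiling_ge[of "\<bar>f x\<bar>"] unfolding A_def by (simp only: mem_Collect_eq) linarith
    then show ?thesis by blast
  qed
  ultimately have "(INF n. emeasure lebesgue (A n)) < ennreal t" using t by simp
  then obtain n where "emeasure lebesgue (A n) < ennreal t" by (auto simp: INF_less_iff)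
  then show ?thesis unfolding A_def by (intro exI[of _ "real n"]) auto
qed

lemma drearr_nonneg:
  assumes "f \<in> borel_measurable lebesgue" "0 < t"
  shows "0 \<le> drearr \<Omega> f t"
  unfolding drearr_def using ex_level_emeasure_le[OF assms] by (intro cInf_greatest) auto

lemma incseq_level_sets: "incseq (\<lambda>n. {x\<in>\<Omega>. m + 1 / real (Suc n) < \<bar>f x\<bar>})"
proof -
  have "1 / real (Suc j) \<le> 1 / real (Suc i)" if "i \<le> j" for i j
    using that by (simp add: frac_le)
  then show ?thesis unfolding incseq_def by (auto intro: order.strict_trans1[rotated] add_left_mono)
qed

lemma UN_level_sets: "(\<Union>n. {x\<in>\<Omega>. m + 1 / real (Suc n) < \<bar>f x\<bar>}) = {x\<in>\<Omega>. m < \<bar>f x\<bar>}"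
proof (intro equalityI subsetI)
  fix x assume x: "x \<in> {x\<in>\<Omega>. m < \<bar>f x\<bar>}"
  then obtain n where "1 / real (Suc n) < \<bar>f x\<bar> - m"
    using reals_Archimedean[of "\<bar>f x\<bar> - m"] by (auto simp: inverse_eq_divide)
  then have "m + 1 / real (Suc n) < \<bar>f x\<bar>" by linarith
  with x show "x \<in> (\<Union>n. {x\<in>\<Omega>. m + 1 / real (Suc n) < \<bar>f x\<bar>})" by blast
qed (auto intro: less_trans[rotated])

text \<open>The infimum defining \<open>f\<^sub>*(t)\<close> is attained, by continuity of the measure from below.\<close>

lemma emeasure_level_drearr_le:
  fixes f :: "'a \<Rightarrow> real"
  assumes f: "f \<in> borel_measurable lebesgue" and t: "0 < t"
  shows "emeasure lebesgue {x\<in>\<Omega>. drearr \<Omega> f t < \<bar>f x\<bar>} \<le> ennreal t"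
proof -
  define m where "m = drearr \<Omega> f t"
  define S where "S = {y. 0 \<le> y \<and> emeasure lebesgue {x\<in>\<Omega>. y < \<bar>f x\<bar>} \<le> ennreal t}"
  have "S \<noteq> {}" using ex_level_emeasure_le[OF f t] unfolding S_def by auto
  define A where "A n = {x\<in>\<Omega>. m + 1 / real (Suc n) < \<bar>f x\<bar>}" for n
  have A_le: "emeasure lebesgue (A n) \<le> ennreal t" for n
  proof -
    have "Inf S < m + 1 / real (Suc n)" by (simp add: m_def S_def drearr_def)
    then obtain y where y: "y \<in> S" "y < m + 1 / real (Suc n)"
      using cInf_lessD[OF \<open>S \<noteq> {}\<close>] by blast
    have "A n \<subseteq> {x\<in>\<Omega>. y < \<bar>f x\<bar>}" unfolding A_def using y(2) by auto
    then have "emeasure lebesgue (A n) \<le> emeasure lebesgue {x\<in>\<Omega>. y < \<bar>f x\<bar>}"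
      by (intro emeasure_mono level_set_sets_lebesgue[OF f])
    also have "\<dots> \<le> ennreal t" using y(1) unfolding S_def by auto
    finally show ?thesis .
  qed
  have "(SUP n. emeasure lebesgue (A n)) = emeasure lebesgue (\<Union>n. A n)"
    unfolding A_def using level_set_sets_lebesgue[OF f] incseq_level_sets
    by (intro SUP_emeasure_incseq) auto
  also have "(\<Union>n. A n) = {x\<in>\<Omega>. m < \<bar>f x\<bar>}" unfolding A_def by (rule UN_level_sets)
  finally have "emeasure lebesgue {x\<in>\<Omega>. m < \<bar>f x\<bar>} = (SUP n. emeasure lebesgue (A n))" ..
  also have "\<dots> \<le> ennreal t" using A_le by (rule SUP_least)
  finally show ?thesis unfolding m_def .
qed

lemma drearr_antimono:
  assumes f: "f \<in> borel_measurable lebesgue" and "0 < s" "s \<le> t"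
  shows "drearr \<Omega> f t \<le> drearr \<Omega> f s"
proof (rule drearr_le)
  show "0 \<le> drearr \<Omega> f s" using drearr_nonneg[OF f \<open>0 < s\<close>] .
  have "emeasure lebesgue {x\<in>\<Omega>. drearr \<Omega> f s < \<bar>f x\<bar>} \<le> ennreal s"
    by (rule emeasure_level_drearr_le[OF f \<open>0 < s\<close>])
  also have "\<dots> \<le> ennreal t" using \<open>s \<le> t\<close> by (rule ennreal_leI)
  finally show "emeasure lebesgue {x\<in>\<Omega>. drearr \<Omega> f s < \<bar>f x\<bar>} \<le> ennreal t" .
qed

lemma borel_measurable_drearr:
  assumes f: "f \<in> borel_measurable lebesgue"
  shows "drearr \<Omega> f \<in> borel_measurable borel"
proof -
  have "drearr \<Omega> f t = drearr \<Omega> f 0" if "t \<le> 0" for t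
    using that unfolding drearr_def by (simp add: ennreal_neg)
  then have "mono_on {..0} (\<lambda>x. - drearr \<Omega> f x)"
    by (intro mono_onI) (metis atMost_iff order_refl)
  moreover have "mono_on {0<..} (\<lambda>x. - drearr \<Omega> f x)"
    using drearr_antimono[OF f] by (intro mono_onI) simp
  ultimately have "(\<lambda>x. - drearr \<Omega> f x) \<in> borel_measurable borel"
    by (intro borel_measurable_piecewise_mono[of "{{..0},{0<..}}"]) auto
  then have "(\<lambda>x. - (- drearr \<Omega> f x)) \<in> borel_measurable borel" by measurable
  then show ?thesis by simp
qed

lemma drearr_le_of_level_subset:
  assumes f: "f \<in> borel_measurable lebesgue" and t: "0 < t" and y: "0 \<le> y"
    and sub: "\<And>x. x \<in> \<Omega> \<Longrightarrow> y < \<bar>g x\<bar> \<Longrightarrow> drearr \<Omega> f t < \<bar>f x\<bar>"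
  shows "drearr \<Omega> g t \<le> y"
proof (rule drearr_le[OF y])
  have "emeasure lebesgue {x\<in>\<Omega>. y < \<bar>g x\<bar>} \<le> emeasure lebesgue {x\<in>\<Omega>. drearr \<Omega> f t < \<bar>f x\<bar>}"
    using sub by (intro emeasure_mono level_set_sets_lebesgue[OF f]) auto
  also have "\<dots> \<le> ennreal t" by (rule emeasure_level_drearr_le[OF f t])
  finally show "emeasure lebesgue {x\<in>\<Omega>. y < \<bar>g x\<bar>} \<le> ennreal t" .
qed

lemma drearr_add_le:
  assumes g0: "g0 \<in> borel_measurable lebesgue" and g1: "g1 \<in> borel_measurable lebesgue"
    and s: "0 < s1" "0 < s2" and le: "\<And>x. x \<in> \<Omega> \<Longrightarrow> \<bar>f x\<bar> \<le> \<bar>g0 x\<bar> + \<bar>g1 x\<bar>"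
  shows "drearr \<Omega> f (s1 + s2) \<le> drearr \<Omega> g0 s1 + drearr \<Omega> g1 s2"
proof (rule drearr_le)
  let ?a = "drearr \<Omega> g0 s1" and ?b = "drearr \<Omega> g1 s2"
  show "0 \<le> ?a + ?b" using drearr_nonneg[OF g0 s(1)] drearr_nonneg[OF g1 s(2)] by simp
  have "{x\<in>\<Omega>. ?a + ?b < \<bar>f x\<bar>} \<subseteq> {x\<in>\<Omega>. ?a < \<bar>g0 x\<bar>} \<union> {x\<in>\<Omega>. ?b < \<bar>g1 x\<bar>}"
    using le by force
  then have "emeasure lebesgue {x\<in>\<Omega>. ?a + ?b < \<bar>f x\<bar>}
      \<le> emeasure lebesgue ({x\<in>\<Omega>. ?a < \<bar>g0 x\<bar>} \<union> {x\<in>\<Omega>. ?b < \<bar>g1 x\<bar>})"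
    by (intro emeasure_mono) (auto intro: level_set_sets_lebesgue g0 g1)
  also have "\<dots> \<le> emeasure lebesgue {x\<in>\<Omega>. ?a < \<bar>g0 x\<bar>} + emeasure lebesgue {x\<in>\<Omega>. ?b < \<bar>g1 x\<bar>}"
    by (intro emeasure_subadditive) (auto intro: level_set_sets_lebesgue g0 g1)
  also have "\<dots> \<le> ennreal s1 + ennreal s2"
    by (intro add_mono emeasure_level_drearr_le g0 g1 s)
  also have "\<dots> = ennreal (s1 + s2)" using s by (simp add: ennreal_plus)
  finally show "emeasure lebesgue {x\<in>\<Omega>. ?a + ?b < \<bar>f x\<bar>} \<le> ennreal (s1 + s2)" .
qed

end

section \<open>Real powers of extended nonnegative reals\<close>

lemma enn_powr_ennreal: "0 \<le> r \<Longrightarrow> enn_powr (ennreal r) a = ennreal (r powr a)"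
  by (simp add: enn_powr_def)

lemma enn_powr_mono:
  assumes "x \<le> y" "0 < a"
  shows "enn_powr x a \<le> enn_powr y a"
proof (cases "y = \<infinity>")
  case False
  then have "x \<noteq> \<infinity>" using assms(1) by (auto simp: top_unique)
  with False assms show ?thesis
    by (cases x; cases y) (auto simp: enn_powr_def intro!: ennreal_leI powr_mono2)
qed (simp add: enn_powr_def)

lemma powr_add_le_add_powr:
  fixes u v a :: real
  assumes "0 \<le> u" "0 \<le> v" "0 < a" "a \<le> 1"
  shows "(u + v) powr a \<le> u powr a + v powr a"
proof (cases "u + v = 0")
  case False
  then have s: "0 < u + v" using assms by simp
  have "u / (u+v) \<le> (u/(u+v)) powr a" "v / (u+v) \<le> (v/(u+v)) powr a"
    using powr_mono'[of a 1 "u/(u+v)"] powr_mono'[of a 1 "v/(u+v)"] assms s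
    by (simp_all add: divide_le_eq)
  moreover have "u/(u+v) + v/(u+v) = 1" using s by (simp add: add_divide_distrib[symmetric])
  ultimately have "1 \<le> (u/(u+v)) powr a + (v/(u+v)) powr a" by linarith
  also have "\<dots> = (u powr a + v powr a) / (u+v) powr a"
    by (simp only: powr_divide add_divide_distrib)
  finally show ?thesis using s by (simp add: le_divide_eq_1_pos)
qed (use assms in simp)

lemma enn_powr_add_le:
  assumes "0 < a" "a \<le> 1"
  shows "enn_powr (x + y) a \<le> enn_powr x a + enn_powr y a"
proof (cases "x = \<infinity> \<or> y = \<infinity>")
  case False
  then obtain u v where "x = ennreal u" "y = ennreal v" "0 \<le> u" "0 \<le> v"
    by (cases x; cases y) auto
  with powr_add_le_add_powr[of u v a] assms show ?thesis
    by (simp add: enn_powr_def ennreal_plus[symmetric] del: ennreal_plus)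
qed (auto simp: enn_powr_def)

lemma enn_powr_ennreal_mult:
  assumes "0 \<le> c" "0 < a"
  shows "enn_powr (ennreal c * x) a = ennreal (c powr a) * enn_powr x a"
proof (cases "x = \<infinity>")
  case True
  then show ?thesis
    using assms by (cases "c = 0") (simp_all add: enn_powr_def ennreal_mult_top)
next
  case False
  then obtain r where r: "x = ennreal r" "0 \<le> r" by (cases x) auto
  then show ?thesis
    using assms by (simp add: enn_powr_ennreal ennreal_mult[symmetric] powr_mult)
qed

lemma borel_measurable_enn_powr[measurable]:
  assumes [measurable]: "f \<in> borel_measurable M"
  shows "(\<lambda>x. enn_powr (f x) a) \<in> borel_measurable M"
proof -
  have "{x\<in>space M. f x = \<infinity>} \<in> sets M" by measurable
  moreover have "(\<lambda>x. ennreal (enn2real (f x) powr a)) \<in> borel_measurable M" by measurable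
  ultimately show ?thesis unfolding enn_powr_def
    by (intro measurable_If[OF measurable_const]) auto
qed

lemma powr_le_two_powr_mult_add:
  fixes y u v p :: real
  assumes "0 \<le> y" "y \<le> u + v" "0 \<le> u" "0 \<le> v" "0 < p"
  shows "y powr p \<le> 2 powr p * (u powr p + v powr p)"
proof -
  have "y powr p \<le> (2 * max u v) powr p" using assms by (intro powr_mono2) auto
  also have "\<dots> = 2 powr p * max u v powr p" using assms by (simp add: powr_mult)
  also have "\<dots> \<le> 2 powr p * (u powr p + v powr p)" by (simp add: max_def)
  finally show ?thesis .
qed

lemma powr_neg_le_twice_add_ln2:
  fixes x a :: real
  assumes x: "1 \<le> x" and a: "0 < a" "a \<le> 1"
  shows "x powr (-a) \<le> 2 * (x + ln 2) powr (-a)"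
proof -
  have "ln (2::real) \<le> 1" using ln_le_minus_one[of 2] by simp
  then have "0 < x + ln 2" "x + ln 2 \<le> 2 * x" using x ln_gt_zero[of "2::real"] by linarith+
  then have "(2 * x) powr (-a) \<le> (x + ln 2) powr (-a)"
    using a by (intro powr_mono2') auto
  moreover have "1 \<le> 2 * 2 powr (-a)"
    using powr_mono[of "-1" "-a" "2::real"] a by (simp add: powr_minus)
  then have "x powr (-a) \<le> 2 * 2 powr (-a) * x powr (-a)"
    using mult_right_mono[OF _ powr_ge_zero[of x "-a"]] by fastforce
  moreover have "2 * 2 powr (-a) * x powr (-a) = 2 * (2 * x) powr (-a)"
    using x by (simp add: powr_mult)
  ultimately show ?thesis by linarith
qed

lemma mult_inverse_powr_one_minus:
  fixes t a :: real
  assumes "0 < t"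
  shows "t * (1/t) powr (1 - a) = t powr a"
proof -
  have "(1/t) powr (1 - a) = inverse (t powr (1 - a))"
    by (simp add: inverse_eq_divide[symmetric] inverse_powr)
  also have "\<dots> = t powr (-(1 - a))" by (rule powr_minus[symmetric])
  finally have "t * (1/t) powr (1 - a) = t powr 1 * t powr (-(1 - a))"
    using assms by simp
  also have "\<dots> = t powr (1 + -(1 - a))" by (rule powr_add[symmetric])
  finally show ?thesis by simp
qed

lemma phi1_pos: "0 < phi1 t"
  by (simp add: phi1_def)

lemma phi1_less_one: "0 < t \<Longrightarrow> t < 1 \<Longrightarrow> phi1 t < 1"
  by (simp add: phi1_def field_simps)

lemma one_minus_ln_phi1: "1 - ln (phi1 t) = 1/t"
  by (simp add: phi1_def)

lemma one_minus_ln_half: "0 < (s::real) \<Longrightarrow> 1 - ln (s/2) = (1 - ln s) + ln 2"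
  by (simp add: ln_div)

lemma powr_one_minus_ln_le_of_le_phi1:
  fixes t s a :: real
  assumes t: "0 < t" and s: "0 < s" "s \<le> phi1 t" and a: "0 \<le> a"
  shows "(1 - ln s) powr (-a) \<le> t powr a"
proof -
  have "ln s \<le> ln (phi1 t)" using s phi1_pos[of t] by simp
  then have "1/t \<le> 1 - ln s" using one_minus_ln_phi1[of t] by simp
  then have "(1 - ln s) powr (-a) \<le> (1/t) powr (-a)"
    using t a by (intro powr_mono2') auto
  also have "\<dots> = t powr a" using t by (simp add: powr_divide powr_minus_divide)
  finally show ?thesis .
qed

lemma powr_le_twice_one_minus_ln_phi1_half:
  fixes t a :: real
  assumes t: "0 < t" "t < 1" and a: "0 < a" "a \<le> 1"
  shows "t powr a \<le> 2 * (1 - ln (phi1 t / 2)) powr (-a)"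
proof -
  have "(1/t) powr (-a) \<le> 2 * (1/t + ln 2) powr (-a)"
    using t a by (intro powr_neg_le_twice_add_ln2) auto
  moreover have "(1/t) powr (-a) = t powr a"
    using t by (simp add: powr_divide powr_minus_divide)
  moreover have "1 - ln (phi1 t / 2) = 1/t + ln 2"
    using one_minus_ln_half[OF phi1_pos] one_minus_ln_phi1 by simp
  ultimately show ?thesis by simp
qed

lemma nn_integral_log_weight:
  fixes p c :: real
  assumes p: "1 < p" and c: "0 < c" "c \<le> 1"
  shows "(\<integral>\<^sup>+ u\<in>{c..1}. ennreal ((1 - ln u) powr (-1/p) / u) \<partial>lborel)
       = ennreal (p/(p-1) * ((1 - ln c) powr (1-1/p) - 1))"
proof -
  define F where "F u = - (p/(p-1)) * (1 - ln u) powr (1-1/p)" for u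
  have "DERIV F u :> (1 - ln u) powr (-1/p) / u" if u: "u \<in> {c..1}" for u
  proof -
    have "0 < u" using u c by auto
    moreover have "u \<le> 1" using u by simp
    ultimately have "ln u \<le> 0" by simp
    then have "0 < 1 - ln u" by linarith
    have "DERIV (\<lambda>u. 1 - ln u) u :> - (1/u)"
      using \<open>0 < u\<close> by (auto intro!: derivative_eq_intros)
    from DERIV_chain2[OF has_real_derivative_powr[OF \<open>0 < 1 - ln u\<close>] this]
    have D: "DERIV F u :> - (p/(p-1)) * ((1-1/p) * (1 - ln u) powr (1-1/p-1) * (- (1/u)))"
      unfolding F_def by (rule DERIV_cmult)
    have R: "- (p/(p-1)) * ((1-1/p) * (1 - ln u) powr (1-1/p-1) * (- (1/u)))
        = (p/(p-1) * (1-1/p)) * ((1 - ln u) powr (1-1/p-1) * (1/u))"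
      by (simp only: mult_minus_left mult_minus_right minus_minus mult_ac)
    have E: "p/(p-1) * (1-1/p) = 1" using p by (simp add: field_simps)
    show ?thesis using D unfolding R E by simp
  qed
  then have "(\<integral>\<^sup>+ u. ennreal ((1 - ln u) powr (-1/p) / u) * indicator {c..1} u \<partial>lborel) = F 1 - F c"
    using c by (intro nn_integral_FTC_Icc) auto
  also have "F 1 - F c = p/(p-1) * ((1 - ln c) powr (1-1/p) - 1)"
    unfolding F_def by (simp add: right_diff_distrib)
  finally show ?thesis by simp
qed

lemma nn_integral_powr_Icc_0:
  fixes a \<phi> :: real
  assumes a: "0 < a" and \<phi>: "0 \<le> \<phi>"
  shows "(\<integral>\<^sup>+ u\<in>{0..\<phi>}. ennreal (u powr (a - 1)) \<partial>lborel) = ennreal (\<phi> powr a / a)"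
proof -
  have "((\<lambda>x. x powr (a - 1)) has_integral (\<phi> powr (a - 1 + 1) / (a - 1 + 1))) {0..\<phi>}"
    using a \<phi> by (intro has_integral_powr_from_0) auto
  then have I: "((\<lambda>x. x powr (a - 1)) has_integral (\<phi> powr a / a)) {0..\<phi>}" by simp
  have eq:  "(\<lambda>u. u powr (a - 1) * indicator {0..\<phi>} u)
      = (\<lambda>u. if u \<in> {0..\<phi>} then u powr (a - 1) else 0)"
    by (auto simp: indicator_def)
  have "((\<lambda>u. u powr (a - 1) * indicator {0..\<phi>} u) has_integral (\<phi> powr a / a)) UNIV"
    using I unfolding eq has_integral_restrict_UNIV .
  then have "(\<integral>\<^sup>+ u. ennreal (u powr (a - 1) * indicator {0..\<phi>} u) \<partial>lborel) = ennreal (\<phi> powr a / a)"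
    by (intro nn_integral_has_integral_lborel) (auto simp: indicator_def)
  then show ?thesis
    by (simp add: indicator_mult_ennreal mult.commute)
qed

lemma nn_integral_Icc_half:
  fixes g :: "real \<Rightarrow> ennreal"
  assumes [measurable]: "g \<in> borel_measurable borel"
  shows "(\<integral>\<^sup>+ x\<in>{\<alpha>..\<beta>}. g (x/2) \<partial>lborel) = 2 * (\<integral>\<^sup>+ x\<in>{\<alpha>/2..\<beta>/2}. g x \<partial>lborel)"
proof -
  have "(\<integral>\<^sup>+ x. g (x/2) * indicator {\<alpha>..\<beta>} x \<partial>lborel)
      = ennreal \<bar>2\<bar> * (\<integral>\<^sup>+ x. g ((0 + 2 * x)/2) * indicator {\<alpha>..\<beta>} (0 + 2 * x) \<partial>lborel)"
    by (rule nn_integral_real_affine) auto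
  also have "(\<lambda>x::real. g ((0 + 2 * x)/2) * indicator {\<alpha>..\<beta>} (0 + 2 * x))
     = (\<lambda>x. g x * indicator {\<alpha>/2..\<beta>/2} x)"
    by (auto simp: indicator_def intro!: ext)
  finally show ?thesis by simp
qed

lemma borel_measurable_nn_integral_Icc:
  fixes g :: "real \<Rightarrow> ennreal"
  assumes [measurable]: "g \<in> borel_measurable borel"
  shows "(\<lambda>u. \<integral>\<^sup>+ x\<in>{\<alpha>..u}. g x \<partial>lborel) \<in> borel_measurable borel"
proof -
  have "(\<lambda>(u, x). g x * indicator {\<alpha>..u} x) \<in> borel_measurable (borel \<Otimes>\<^sub>M lborel)"
  proof -
    have "{z::real\<times>real \<in> space (borel \<Otimes>\<^sub>M lborel). \<alpha> \<le> snd z \<and> snd z \<le> fst z}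
        \<in> sets (borel \<Otimes>\<^sub>M lborel)" by measurable
    then have "(\<lambda>z::real\<times>real. g (snd z) * (if \<alpha> \<le> snd z \<and> snd z \<le> fst z then 1 else 0))
        \<in> borel_measurable (borel \<Otimes>\<^sub>M lborel)"
      by (intro borel_measurable_times_ennreal measurable_If[OF measurable_const measurable_const])
        (auto intro: measurable_compose[OF measurable_snd])
    then show ?thesis by (simp add: case_prod_beta' indicator_def)
  qed
  from lborel.borel_measurable_nn_integral_fst[OF this] show ?thesis by simp
qed

section \<open>The norms as functionals of the rearrangement\<close>

definition pow_integral :: "real \<Rightarrow> (real \<Rightarrow> real) \<Rightarrow> real \<Rightarrow> real \<Rightarrow> ennreal" where
  "pow_integral p h \<alpha> \<beta> = (\<integral>\<^sup>+ x\<in>{\<alpha>..\<beta>}. ennreal (h x powr p) \<partial>lborel)"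

definition log_weight :: "real \<Rightarrow> real \<Rightarrow> ennreal" where
  "log_weight p s = ennreal ((1 - ln s) powr (-1/p))"

definition log_density :: "real \<Rightarrow> real \<Rightarrow> ennreal" where
  "log_density p u = ennreal ((1 - ln u) powr (-1/p) / u)"

definition grand_fun :: "real \<Rightarrow> (real \<Rightarrow> real) \<Rightarrow> ennreal" where
  "grand_fun p h = (SUP s\<in>{0<..<1}. log_weight p s * enn_powr (pow_integral p h s 1) (1/p))"

definition small_fun :: "real \<Rightarrow> (real \<Rightarrow> real) \<Rightarrow> ennreal" where
  "small_fun p h = (\<integral>\<^sup>+ u\<in>{0<..<1}. log_density p u * enn_powr (pow_integral p h 0 u) (1/p) \<partial>lborel)"

definition grand_fun_upto :: "real \<Rightarrow> (real \<Rightarrow> real) \<Rightarrow> real \<Rightarrow> ennreal" where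
  "grand_fun_upto p h \<phi> = (SUP s\<in>{0<..<\<phi>}. log_weight p s * enn_powr (pow_integral p h s \<phi>) (1/p))"

definition small_fun_from :: "real \<Rightarrow> (real \<Rightarrow> real) \<Rightarrow> real \<Rightarrow> ennreal" where
  "small_fun_from p h \<phi> = (\<integral>\<^sup>+ u\<in>{\<phi>..1}. log_density p u * enn_powr (pow_integral p h \<phi> u) (1/p) \<partial>lborel)"

lemma grand_norm_eq_grand_fun: "grand_norm p \<Omega> g = grand_fun p (drearr \<Omega> g)"
  unfolding grand_norm_def grand_fun_def log_weight_def pow_integral_def ..

lemma small_norm_eq_small_fun: "small_norm p \<Omega> g = small_fun p (drearr \<Omega> g)"
  unfolding small_norm_def small_fun_def log_density_def pow_integral_def ..

lemma Krhs_eq: "Krhs p \<Omega> f t =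
    grand_fun_upto p (drearr \<Omega> f) (phi1 t) + ennreal t * small_fun_from p (drearr \<Omega> f) (phi1 t)"
  unfolding Krhs_def grand_fun_upto_def small_fun_from_def log_weight_def log_density_def
    pow_integral_def ..

lemma grand_fun_upper: "0 < s \<Longrightarrow> s < 1 \<Longrightarrow> log_weight p s * enn_powr (pow_integral p h s 1) (1/p) \<le> grand_fun p h"
  unfolding grand_fun_def by (rule SUP_upper) auto

lemma grand_fun_upto_upper:
  "0 < s \<Longrightarrow> s < \<phi> \<Longrightarrow> log_weight p s * enn_powr (pow_integral p h s \<phi>) (1/p) \<le> grand_fun_upto p h \<phi>"
  unfolding grand_fun_upto_def by (rule SUP_upper) auto

lemma pow_integral_mono_interval: "\<alpha>' \<le> \<alpha> \<Longrightarrow> \<beta> \<le> \<beta>' \<Longrightarrow> pow_integral p h \<alpha> \<beta> \<le> pow_integral p h \<alpha>' \<beta>'"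
  unfolding pow_integral_def by (intro nn_integral_mono) (auto simp: indicator_def)

lemma borel_measurable_pow_integral_root[measurable]:
  assumes [measurable]: "h \<in> borel_measurable borel"
  shows "(\<lambda>u. enn_powr (pow_integral p h \<alpha> u) a) \<in> borel_measurable borel"
  unfolding pow_integral_def by (intro borel_measurable_enn_powr borel_measurable_nn_integral_Icc) simp

lemma borel_measurable_log_density[measurable]: "log_density p \<in> borel_measurable borel"
  unfolding log_density_def by measurable

lemma nn_integral_log_density:
  "1 < p \<Longrightarrow> 0 < c \<Longrightarrow> c \<le> 1 \<Longrightarrow>
    (\<integral>\<^sup>+ u\<in>{c..1}. log_density p u \<partial>lborel) = ennreal (p/(p-1) * ((1 - ln c) powr (1-1/p) - 1))"
  unfolding log_density_def by (rule nn_integral_log_weight)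

lemma nn_integral_log_density_phi1_le:
  assumes p: "1 < p" and t: "0 < t" "t < 1"
  shows "ennreal t * (\<integral>\<^sup>+ u\<in>{phi1 t..1}. log_density p u \<partial>lborel) \<le> ennreal (p/(p-1) * t powr (1/p))"
proof -
  have "1 \<le> (1/t) powr (1-1/p)" using p t by (intro ge_one_powr_ge_zero) auto
  then have "0 \<le> p/(p-1) * ((1/t) powr (1-1/p) - 1)" using p by simp
  moreover have "(\<integral>\<^sup>+ u\<in>{phi1 t..1}. log_density p u \<partial>lborel)
      = ennreal (p/(p-1) * ((1/t) powr (1-1/p) - 1))"
    using nn_integral_log_density[OF p phi1_pos less_imp_le[OF phi1_less_one[OF t]]]
    by (simp add: one_minus_ln_phi1)
  ultimately have "ennreal t * (\<integral>\<^sup>+ u\<in>{phi1 t..1}. log_density p u \<partial>lborel)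
      = ennreal (t * (p/(p-1) * ((1/t) powr (1-1/p) - 1)))"
    using t by (subst ennreal_mult) simp_all
  also have "\<dots> \<le> ennreal (t * (p/(p-1) * (1/t) powr (1-1/p)))"
    using p t by (intro ennreal_leI mult_left_mono) auto
  also have "t * (p/(p-1) * (1/t) powr (1-1/p)) = p/(p-1) * t powr (1/p)"
    using mult_inverse_powr_one_minus[OF t(1), of "1/p"] by (simp add: mult_ac)
  finally show ?thesis .
qed

lemma small_fun_ge_nn_integral_from:
  assumes "0 < c"
  shows "(\<integral>\<^sup>+ u\<in>{c..1}. log_density p u * enn_powr (pow_integral p h 0 u) (1/p) \<partial>lborel) \<le> small_fun p h"
  unfolding small_fun_def
proof (rule nn_integral_mono_AE)
  show "AE u in lborel. log_density p u * enn_powr (pow_integral p h 0 u) (1/p) * indicator {c..1} u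
     \<le> log_density p u * enn_powr (pow_integral p h 0 u) (1/p) * indicator {0<..<1} u"
    using AE_lborel_singleton[of 1] by eventually_elim (use assms in \<open>auto simp: indicator_def\<close>)
qed

text \<open>Since \<open>u \<mapsto> \<integral>\<^sub>0\<^sup>u h\<^sup>p\<close> increases, the tail of \<open>small_fun\<close> beyond \<open>c\<close> already controls \<open>(\<integral>\<^sub>0\<^sup>c h\<^sup>p)\<^sup>1\<^sup>/\<^sup>p\<close>.\<close>

lemma small_fun_ge:
  assumes p: "1 < p" and c: "0 < c" "c \<le> 1"
  shows "ennreal (p/(p-1) * ((1 - ln c) powr (1-1/p) - 1)) * enn_powr (pow_integral p h 0 c) (1/p)
    \<le> small_fun p h"
proof -
  have "ennreal (p/(p-1) * ((1 - ln c) powr (1-1/p) - 1)) * enn_powr (pow_integral p h 0 c) (1/p)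
      = (\<integral>\<^sup>+ u. log_density p u * indicator {c..1} u * enn_powr (pow_integral p h 0 c) (1/p) \<partial>lborel)"
    using nn_integral_log_density[OF p c] by (simp add: nn_integral_multc)
  also have "\<dots> \<le> (\<integral>\<^sup>+ u\<in>{c..1}. log_density p u * enn_powr (pow_integral p h 0 u) (1/p) \<partial>lborel)"
    using p by (intro nn_integral_mono)
      (auto simp: indicator_def intro!: mult_left_mono enn_powr_mono pow_integral_mono_interval)
  also have "\<dots> \<le> small_fun p h" by (rule small_fun_ge_nn_integral_from[OF c(1)])
  finally show ?thesis .
qed

definition small_embed_const :: "real \<Rightarrow> real" where
  "small_embed_const p = 1 / (p/(p-1) * (1 - (1 + ln 2) powr (-(1-1/p))))"

lemma small_embed_const_pos: "1 < p \<Longrightarrow> 0 < small_embed_const p"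
  unfolding small_embed_const_def
  by (intro divide_pos_pos mult_pos_pos) (auto intro: powr_less_one)

lemma powr_sub_one_ge:
  fixes c y b :: real
  assumes "1 < c" "c \<le> y" "0 < b"
  shows "(1 - c powr (-b)) * y powr b \<le> y powr b - 1"
proof -
  have "1 = c powr (-b) * c powr b" using assms by (simp add: powr_add[symmetric])
  also have "\<dots> \<le> c powr (-b) * y powr b" using assms by (intro mult_left_mono powr_mono2) auto
  finally show ?thesis by (simp add: algebra_simps)
qed

lemma powr_le_small_embed_const:
  fixes p t :: real
  assumes p: "1 < p" and t: "0 < t" "t < 1"
  shows "t powr (1/p) \<le> small_embed_const p * (t * (p/(p-1) * ((1 - ln (phi1 t / 2)) powr (1-1/p) - 1)))"
proof -
  define y where "y = 1 - ln (phi1 t / 2)"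
  define k where "k = (1 + ln 2) powr (-(1-1/p))"
  have y: "y = 1/t + ln 2" unfolding y_def using one_minus_ln_half[OF phi1_pos] one_minus_ln_phi1 by simp
  moreover have "1 \<le> 1/t" using t by simp
  ultimately have y_ge: "1/t \<le> y" "1 + ln 2 \<le> y" by simp_all
  have k: "k < 1" unfolding k_def using p by (intro powr_less_one) auto
  have "t powr (1/p) = t * (1/t) powr (1-1/p)" using mult_inverse_powr_one_minus[OF t(1)] by simp
  also have "\<dots> \<le> t * y powr (1-1/p)"
    using t p y_ge by (intro mult_left_mono powr_mono2) auto
  finally have "(1 - k) * t powr (1/p) \<le> t * ((1 - k) * y powr (1-1/p))"
    using k by (simp add: mult_left_mono mult.left_commute)
  also have "\<dots> \<le> t * (y powr (1-1/p) - 1)"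
    unfolding k_def using p t y_ge by (intro mult_left_mono powr_sub_one_ge) auto
  finally have "t powr (1/p) \<le> t * (y powr (1-1/p) - 1) / (1 - k)"
    using k by (simp add: field_simps)
  also have "\<dots> = small_embed_const p * (t * (p/(p-1) * (y powr (1-1/p) - 1)))"
  proof -
    have "t * X / m = 1 / (q * m) * (t * (q * X))" if "q \<noteq> 0" "m \<noteq> 0" for X q m :: real
      using that by (simp add: field_simps)
    then show ?thesis
      unfolding small_embed_const_def k_def[symmetric] using p k by simp
  qed
  finally show ?thesis unfolding y_def .
qed

lemma powr_mult_pow_integral_le_small_fun:
  assumes p: "1 < p" and t: "0 < t" "t < 1"
  shows "ennreal (t powr (1/p)) * enn_powr (pow_integral p h 0 (phi1 t / 2)) (1/p)
    \<le> ennreal (small_embed_const p) * (ennreal t * small_fun p h)"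
proof -
  define Y where "Y = p/(p-1) * ((1 - ln (phi1 t / 2)) powr (1-1/p) - 1)"
  define E where "E = enn_powr (pow_integral p h 0 (phi1 t / 2)) (1/p)"
  have c: "0 < phi1 t / 2" "phi1 t / 2 \<le> 1" using phi1_pos[of t] phi1_less_one[OF t] by auto
  then have "1 \<le> (1 - ln (phi1 t / 2)) powr (1-1/p)" using p by (intro ge_one_powr_ge_zero) auto
  then have Y: "0 \<le> Y" unfolding Y_def using p by simp
  have "ennreal (t powr (1/p)) * E \<le> ennreal (small_embed_const p * (t * Y)) * E"
    using powr_le_small_embed_const[OF p t] unfolding Y_def by (intro mult_right_mono ennreal_leI) auto
  also have "\<dots> = ennreal (small_embed_const p) * (ennreal t * (ennreal Y * E))"
    using small_embed_const_pos[OF p] t Y by (simp add: ennreal_mult mult.assoc)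
  also have "\<dots> \<le> ennreal (small_embed_const p) * (ennreal t * small_fun p h)"
    unfolding Y_def E_def by (intro mult_left_mono small_fun_ge[OF p c]) auto
  finally show ?thesis unfolding E_def .
qed

lemma pow_integral_le_of_le_half_sum:
  fixes h h0 h1 :: "real \<Rightarrow> real"
  assumes p: "1 < p" and [measurable]: "h0 \<in> borel_measurable borel" "h1 \<in> borel_measurable borel"
    and nonneg: "\<And>x. 0 < x \<Longrightarrow> 0 \<le> h x \<and> 0 \<le> h0 x \<and> 0 \<le> h1 x"
    and le: "\<And>x. 0 < x \<Longrightarrow> h x \<le> h0 (x/2) + h1 (x/2)"
    and \<alpha>: "0 < \<alpha>"
  shows "pow_integral p h \<alpha> \<beta>
    \<le> ennreal (2 powr (p+1)) * (pow_integral p h0 (\<alpha>/2) (\<beta>/2) + pow_integral p h1 (\<alpha>/2) (\<beta>/2))"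
proof -
  have "pow_integral p h \<alpha> \<beta> \<le> (\<integral>\<^sup>+ x. ennreal (2 powr p) *
      (ennreal (h0 (x/2) powr p) * indicator {\<alpha>..\<beta>} x + ennreal (h1 (x/2) powr p) * indicator {\<alpha>..\<beta>} x) \<partial>lborel)"
    unfolding pow_integral_def
  proof (intro nn_integral_mono)
    fix x :: real
    have "h x powr p \<le> 2 powr p * (h0 (x/2) powr p + h1 (x/2) powr p)" if "0 < x"
      using nonneg[OF that] nonneg[of "x/2"] that le[OF that] p
      by (intro powr_le_two_powr_mult_add) auto
    then show "ennreal (h x powr p) * indicator {\<alpha>..\<beta>} x \<le> ennreal (2 powr p) *
      (ennreal (h0 (x/2) powr p) * indicator {\<alpha>..\<beta>} x + ennreal (h1 (x/2) powr p) * indicator {\<alpha>..\<beta>} x)"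
      using \<alpha> by (auto simp: indicator_def ennreal_mult[symmetric] ennreal_plus[symmetric]
          simp del: ennreal_plus intro!: ennreal_leI)
  qed
  also have "\<dots> = ennreal (2 powr p) * ((\<integral>\<^sup>+ x\<in>{\<alpha>..\<beta>}. ennreal (h0 (x/2) powr p) \<partial>lborel)
       + (\<integral>\<^sup>+ x\<in>{\<alpha>..\<beta>}. ennreal (h1 (x/2) powr p) \<partial>lborel))"
    by (simp add: nn_integral_cmult nn_integral_add)
  also have "\<dots> = ennreal (2 powr p) * (2 * pow_integral p h0 (\<alpha>/2) (\<beta>/2) + 2 * pow_integral p h1 (\<alpha>/2) (\<beta>/2))"
    unfolding pow_integral_def
    by (simp add: nn_integral_Icc_half[of "\<lambda>x. ennreal (h0 x powr p)"]
        nn_integral_Icc_half[of "\<lambda>x. ennreal (h1 x powr p)"])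
  also have "\<dots> = ennreal (2 powr (p+1)) * (pow_integral p h0 (\<alpha>/2) (\<beta>/2) + pow_integral p h1 (\<alpha>/2) (\<beta>/2))"
    by (simp add: powr_add ennreal_mult distrib_left mult_ac)
  finally show ?thesis .
qed

lemma enn_powr_le_of_le_mult_add:
  fixes p :: real and X Y Z :: ennreal
  assumes p: "1 < p" and le: "X \<le> ennreal (2 powr (p+1)) * (Y + Z)"
  shows "enn_powr X (1/p) \<le> ennreal (2 powr ((p+1)/p)) * (enn_powr Y (1/p) + enn_powr Z (1/p))"
proof -
  have a: "0 < 1/p" "1/p \<le> 1" using p by auto
  have "enn_powr X (1/p) \<le> enn_powr (ennreal (2 powr (p+1)) * (Y + Z)) (1/p)"
    by (rule enn_powr_mono[OF le a(1)])
  also have "\<dots> = ennreal (2 powr ((p+1)/p)) * enn_powr (Y + Z) (1/p)"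
    using a by (simp add: enn_powr_ennreal_mult powr_powr)
  also have "\<dots> \<le> ennreal (2 powr ((p+1)/p)) * (enn_powr Y (1/p) + enn_powr Z (1/p))"
    by (intro mult_left_mono enn_powr_add_le a) simp
  finally show ?thesis .
qed

lemma log_weight_le_twice_half:
  assumes p: "1 < p" and s: "0 < s" "s \<le> 1"
  shows "log_weight p s \<le> 2 * log_weight p (s/2)"
proof -
  have "(1 - ln s) powr (-(1/p)) \<le> 2 * ((1 - ln s) + ln 2) powr (-(1/p))"
    using p s by (intro powr_neg_le_twice_add_ln2) auto
  then have "ennreal ((1 - ln s) powr (-(1/p))) \<le> ennreal (2 * (1 - ln (s/2)) powr (-(1/p)))"
    unfolding one_minus_ln_half[OF s(1)] by (rule ennreal_leI)
  then show ?thesis unfolding log_weight_def by (simp add: ennreal_mult)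
qed

lemma log_weight_le_powr_of_le_phi1:
  assumes p: "1 < p" and t: "0 < t" and s: "0 < s" "s \<le> phi1 t"
  shows "log_weight p s \<le> ennreal (t powr (1/p))"
  unfolding log_weight_def using powr_one_minus_ln_le_of_le_phi1[OF t s, of "1/p"] p by (simp add: ennreal_leI)

lemma powr_mult_root_pow_integral_le_grand_fun:
  assumes p: "1 < p" and t: "0 < t" "t < 1"
  shows "ennreal (t powr (1/p)) * enn_powr (pow_integral p h (phi1 t / 2) 1) (1/p) \<le> 2 * grand_fun p h"
proof -
  have "ennreal (t powr (1/p)) \<le> ennreal (2 * (1 - ln (phi1 t / 2)) powr (-(1/p)))"
    using powr_le_twice_one_minus_ln_phi1_half[OF t, of "1/p"] p by (intro ennreal_leI) auto
  then have "ennreal (t powr (1/p)) \<le> 2 * log_weight p (phi1 t / 2)"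
    by (simp add: log_weight_def ennreal_mult)
  then have "ennreal (t powr (1/p)) * enn_powr (pow_integral p h (phi1 t / 2) 1) (1/p)
      \<le> 2 * log_weight p (phi1 t / 2) * enn_powr (pow_integral p h (phi1 t / 2) 1) (1/p)"
    by (rule mult_right_mono) simp
  also have "\<dots> = 2 * (log_weight p (phi1 t / 2) * enn_powr (pow_integral p h (phi1 t / 2) 1) (1/p))"
    by (simp add: mult.assoc)
  also have "\<dots> \<le> 2 * grand_fun p h"
    using phi1_pos[of t] phi1_less_one[OF t] by (intro mult_left_mono grand_fun_upper) auto
  finally show ?thesis .
qed

lemma ennreal_lincomb_le:
  fixes G T :: ennreal and a b c d :: real
  assumes "0 \<le> a" "0 \<le> b" "0 \<le> c" "0 \<le> d"
  shows "ennreal a * G + ennreal b * T + (ennreal c * G + ennreal d * T) \<le> ennreal (a + b + c + d) * (G + T)"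
proof -
  have "ennreal a * G + ennreal b * T + (ennreal c * G + ennreal d * T)
      \<le> (ennreal a * G + ennreal a * T) + (ennreal b * G + ennreal b * T)
        + ((ennreal c * G + ennreal c * T) + (ennreal d * G + ennreal d * T))"
    by (intro add_mono) (simp_all add: add_increasing add_increasing2)
  also have "\<dots> = ennreal (a + b + c + d) * (G + T)"
    using assms by (simp add: ennreal_plus distrib_left distrib_right)
  finally show ?thesis .
qed

section \<open>Lower estimate\<close>

text \<open>\<open>h\<^sub>0\<close>, \<open>h\<^sub>1\<close> stand for the rearrangements of the summands of a decomposition \<open>f = g\<^sub>0 + g\<^sub>1\<close>, and
  \<open>h\<close> for \<open>f\<^sub>*\<close>.\<close>

locale rearrangement_split =
  fixes p t :: real and h h0 h1 :: "real \<Rightarrow> real"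
  assumes p: "1 < p" and t: "0 < t" "t < 1"
    and measurable_h0[measurable]: "h0 \<in> borel_measurable borel"
    and measurable_h1[measurable]: "h1 \<in> borel_measurable borel"
    and nonneg: "\<And>x. 0 < x \<Longrightarrow> 0 \<le> h x \<and> 0 \<le> h0 x \<and> 0 \<le> h1 x"
    and le_half_sum: "\<And>x. 0 < x \<Longrightarrow> h x \<le> h0 (x/2) + h1 (x/2)"
begin

abbreviation "\<phi> \<equiv> phi1 t"
abbreviation "c0 \<equiv> 2 powr ((p+1)/p)"

lemma phi_bounds: "0 < \<phi>" "\<phi> < 1"
  using phi1_pos phi1_less_one[OF t] by auto

lemma root_pow_integral_split:
  assumes "0 < \<alpha>"
  shows "enn_powr (pow_integral p h \<alpha> \<beta>) (1/p)
    \<le> ennreal c0 * (enn_powr (pow_integral p h0 (\<alpha>/2) (\<beta>/2)) (1/p) + enn_powr (pow_integral p h1 (\<alpha>/2) (\<beta>/2)) (1/p))"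
  using p nonneg le_half_sum assms
  by (intro enn_powr_le_of_le_mult_add pow_integral_le_of_le_half_sum) auto

lemma grand_fun_upto_le:
  "grand_fun_upto p h \<phi>
    \<le> ennreal c0 * (2 * grand_fun p h0 + ennreal (small_embed_const p) * (ennreal t * small_fun p h1))"
  unfolding grand_fun_upto_def
proof (rule SUP_least)
  fix s assume s: "s \<in> {0<..<\<phi>}"
  define E0 where "E0 = enn_powr (pow_integral p h0 (s/2) 1) (1/p)"
  define E1 where "E1 = enn_powr (pow_integral p h1 0 (\<phi>/2)) (1/p)"
  have "enn_powr (pow_integral p h s \<phi>) (1/p) \<le> ennreal c0 *
      (enn_powr (pow_integral p h0 (s/2) (\<phi>/2)) (1/p) + enn_powr (pow_integral p h1 (s/2) (\<phi>/2)) (1/p))"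
    using s by (intro root_pow_integral_split) auto
  also have "\<dots> \<le> ennreal c0 * (E0 + E1)" unfolding E0_def E1_def
    using s phi_bounds p by (intro mult_left_mono add_mono enn_powr_mono pow_integral_mono_interval) auto
  finally have "log_weight p s * enn_powr (pow_integral p h s \<phi>) (1/p)
      \<le> log_weight p s * (ennreal c0 * (E0 + E1))"
    by (rule mult_left_mono) simp
  also have "\<dots> = ennreal c0 * (log_weight p s * E0 + log_weight p s * E1)"
    by (simp add: algebra_simps)
  also have "\<dots> \<le> ennreal c0 * (2 * grand_fun p h0 + ennreal (small_embed_const p) * (ennreal t * small_fun p h1))"
  proof (intro mult_left_mono add_mono)
    have "log_weight p s * E0 \<le> 2 * log_weight p (s/2) * E0"
      using s phi_bounds by (intro mult_right_mono log_weight_le_twice_half[OF p]) auto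
    also have "\<dots> = 2 * (log_weight p (s/2) * E0)" by (simp add: mult.assoc)
    also have "\<dots> \<le> 2 * grand_fun p h0"
      unfolding E0_def using s phi_bounds by (intro mult_left_mono grand_fun_upper) auto
    finally show "log_weight p s * E0 \<le> 2 * grand_fun p h0" .
    have "log_weight p s * E1 \<le> ennreal (t powr (1/p)) * E1"
      using log_weight_le_powr_of_le_phi1[OF p t(1), of s] s by (intro mult_right_mono) auto
    also have "\<dots> \<le> ennreal (small_embed_const p) * (ennreal t * small_fun p h1)"
      unfolding E1_def by (rule powr_mult_pow_integral_le_small_fun[OF p t])
    finally show "log_weight p s * E1 \<le> ennreal (small_embed_const p) * (ennreal t * small_fun p h1)" .
  qed simp
  finally show "log_weight p s * enn_powr (pow_integral p h s \<phi>) (1/p)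
    \<le> ennreal c0 * (2 * grand_fun p h0 + ennreal (small_embed_const p) * (ennreal t * small_fun p h1))" .
qed

lemma small_fun_from_split_le:
  "small_fun_from p h \<phi> \<le> ennreal c0 * (enn_powr (pow_integral p h0 (\<phi>/2) 1) (1/p)
      * (\<integral>\<^sup>+ u\<in>{\<phi>..1}. log_density p u \<partial>lborel) + small_fun p h1)"
proof -
  define F0 where "F0 = enn_powr (pow_integral p h0 (\<phi>/2) 1) (1/p)"
  have "small_fun_from p h \<phi> \<le> (\<integral>\<^sup>+ u. ennreal c0 * (F0 * (log_density p u * indicator {\<phi>..1} u)
       + log_density p u * enn_powr (pow_integral p h1 0 u) (1/p) * indicator {\<phi>..1} u) \<partial>lborel)"
    unfolding small_fun_from_def
  proof (intro nn_integral_mono)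
    fix u :: real
    have "enn_powr (pow_integral p h \<phi> u) (1/p)
        \<le> ennreal c0 * (F0 + enn_powr (pow_integral p h1 0 u) (1/p))" if "u \<in> {\<phi>..1}"
    proof -
      have "enn_powr (pow_integral p h \<phi> u) (1/p) \<le> ennreal c0 *
          (enn_powr (pow_integral p h0 (\<phi>/2) (u/2)) (1/p) + enn_powr (pow_integral p h1 (\<phi>/2) (u/2)) (1/p))"
        using phi_bounds by (intro root_pow_integral_split) auto
      also have "\<dots> \<le> ennreal c0 * (F0 + enn_powr (pow_integral p h1 0 u) (1/p))" unfolding F0_def
        using that phi_bounds p by (intro mult_left_mono add_mono enn_powr_mono pow_integral_mono_interval) auto
      finally show ?thesis .
    qed
    then show "log_density p u * enn_powr (pow_integral p h \<phi> u) (1/p) * indicator {\<phi>..1} u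
      \<le> ennreal c0 * (F0 * (log_density p u * indicator {\<phi>..1} u)
       + log_density p u * enn_powr (pow_integral p h1 0 u) (1/p) * indicator {\<phi>..1} u)"
      by (auto simp: indicator_def algebra_simps intro: mult_left_mono[of _ _ "log_density p u", THEN order_trans])
  qed
  also have "\<dots> = ennreal c0 * (F0 * (\<integral>\<^sup>+ u\<in>{\<phi>..1}. log_density p u \<partial>lborel)
      + (\<integral>\<^sup>+ u\<in>{\<phi>..1}. log_density p u * enn_powr (pow_integral p h1 0 u) (1/p) \<partial>lborel))"
    by (simp add: nn_integral_cmult nn_integral_add)
  also have "\<dots> \<le> ennreal c0 * (F0 * (\<integral>\<^sup>+ u\<in>{\<phi>..1}. log_density p u \<partial>lborel) + small_fun p h1)"
    using phi_bounds by (intro mult_left_mono add_mono small_fun_ge_nn_integral_from) auto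
  finally show ?thesis unfolding F0_def .
qed

lemma small_fun_from_le:
  "ennreal t * small_fun_from p h \<phi>
    \<le> ennreal c0 * (ennreal (2 * (p/(p-1))) * grand_fun p h0 + ennreal t * small_fun p h1)"
proof -
  define F0 where "F0 = enn_powr (pow_integral p h0 (\<phi>/2) 1) (1/p)"
  have "ennreal t * small_fun_from p h \<phi> \<le> ennreal t * (ennreal c0 *
      (F0 * (\<integral>\<^sup>+ u\<in>{\<phi>..1}. log_density p u \<partial>lborel) + small_fun p h1))"
    unfolding F0_def by (intro mult_left_mono small_fun_from_split_le) simp
  also have "\<dots> = ennreal c0 *
      (F0 * (ennreal t * (\<integral>\<^sup>+ u\<in>{\<phi>..1}. log_density p u \<partial>lborel)) + ennreal t * small_fun p h1)"
    by (simp add: algebra_simps)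
  also have "\<dots> \<le> ennreal c0 * (F0 * ennreal (p/(p-1) * t powr (1/p)) + ennreal t * small_fun p h1)"
    using nn_integral_log_density_phi1_le[OF p t] by (intro mult_left_mono add_mono) auto
  also have "\<dots> = ennreal c0 * (ennreal (p/(p-1)) * (ennreal (t powr (1/p)) * F0) + ennreal t * small_fun p h1)"
    using p by (subst ennreal_mult) (simp_all add: mult_ac)
  also have "\<dots> \<le> ennreal c0 * (ennreal (p/(p-1)) * (2 * grand_fun p h0) + ennreal t * small_fun p h1)"
    unfolding F0_def
    by (intro mult_left_mono add_mono powr_mult_root_pow_integral_le_grand_fun[OF p t]) auto
  also have "\<dots> = ennreal c0 * (ennreal (2 * (p/(p-1))) * grand_fun p h0 + ennreal t * small_fun p h1)"
    using p by (subst ennreal_mult) (simp_all add: mult_ac)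
  finally show ?thesis .
qed

lemma grand_fun_upto_add_small_fun_from_le:
  "grand_fun_upto p h \<phi> + ennreal t * small_fun_from p h \<phi>
    \<le> ennreal (c0 * (2 + small_embed_const p + 2 * (p/(p-1)) + 1)) * (grand_fun p h0 + ennreal t * small_fun p h1)"
proof -
  let ?G = "grand_fun p h0" and ?T = "ennreal t * small_fun p h1"
  have "grand_fun_upto p h \<phi> + ennreal t * small_fun_from p h \<phi>
      \<le> ennreal c0 * (ennreal 2 * ?G + ennreal (small_embed_const p) * ?T)
        + ennreal c0 * (ennreal (2 * (p/(p-1))) * ?G + ennreal 1 * ?T)"
    using grand_fun_upto_le small_fun_from_le by (intro add_mono) auto
  also have "\<dots> \<le> ennreal c0 * (ennreal (2 + small_embed_const p + 2 * (p/(p-1)) + 1) * (?G + ?T))"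
    unfolding distrib_left[symmetric] using p small_embed_const_pos[OF p]
    by (intro mult_left_mono ennreal_lincomb_le) auto
  finally show ?thesis
    using p small_embed_const_pos[OF p] by (simp add: ennreal_mult mult.assoc)
qed

end

section \<open>Upper estimate\<close>

text \<open>\<open>h\<^sub>0\<close>, \<open>h\<^sub>1\<close> stand for the rearrangements of the two parts of \<open>f\<close> cut at height
  \<open>f\<^sub>*(\<phi>\<^sub>1(t))\<close>, and \<open>h\<close> for \<open>f\<^sub>*\<close>.\<close>

locale truncation_split =
  fixes p t :: real and h h0 h1 :: "real \<Rightarrow> real"
  assumes p: "1 < p" and t: "0 < t" "t < 1"
    and measurable_h[measurable]: "h \<in> borel_measurable borel"
    and nonneg: "\<And>x. 0 < x \<Longrightarrow> 0 \<le> h x"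
    and antimono: "\<And>x y. 0 < x \<Longrightarrow> x \<le> y \<Longrightarrow> h y \<le> h x"
    and h0_bounds: "\<And>x. 0 < x \<Longrightarrow> 0 \<le> h0 x \<and> h0 x \<le> max 0 (h x - h (phi1 t))"
    and h1_bounds: "\<And>x. 0 < x \<Longrightarrow> 0 \<le> h1 x \<and> h1 x \<le> min (h x) (h (phi1 t))"
begin

abbreviation "\<phi> \<equiv> phi1 t"
abbreviation "level \<equiv> h (phi1 t)"

lemma phi_bounds: "0 < \<phi>" "\<phi> < 1"
  using phi1_pos phi1_less_one[OF t] by auto

lemma level_nonneg: "0 \<le> level"
  using nonneg phi_bounds by auto

lemma h0_vanishes: "\<phi> \<le> x \<Longrightarrow> h0 x = 0"
  using h0_bounds[of x] antimono[of \<phi> x] phi_bounds by fastforce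

lemma grand_fun_h0_le: "grand_fun p h0 \<le> grand_fun_upto p h \<phi>"
  unfolding grand_fun_def
proof (rule SUP_least)
  fix s assume s: "s \<in> {0<..<1::real}"
  show "log_weight p s * enn_powr (pow_integral p h0 s 1) (1/p) \<le> grand_fun_upto p h \<phi>"
  proof (cases "s < \<phi>")
    case True
    have "h0 x powr p \<le> h x powr p" if "0 < x" for x
      using h0_bounds[OF that] nonneg[OF that] level_nonneg p by (intro powr_mono2) auto
    then have "pow_integral p h0 s 1 \<le> pow_integral p h s \<phi>"
      unfolding pow_integral_def using s h0_vanishes
      by (intro nn_integral_mono) (auto simp: indicator_def not_le intro!: ennreal_leI)
    then have "log_weight p s * enn_powr (pow_integral p h0 s 1) (1/p)
        \<le> log_weight p s * enn_powr (pow_integral p h s \<phi>) (1/p)"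
      using p by (intro mult_left_mono enn_powr_mono) auto
    also have "\<dots> \<le> grand_fun_upto p h \<phi>" using s True by (intro grand_fun_upto_upper) auto
    finally show ?thesis .
  next
    case False
    then have "ennreal (h0 x powr p) * indicator {s..1} x = 0" for x
      using h0_vanishes by (auto simp: indicator_def)
    then have "pow_integral p h0 s 1 = 0" unfolding pow_integral_def by (simp del: mult_eq_0_iff)
    then show ?thesis by (simp add: enn_powr_def)
  qed
qed

lemma h1_powr_le: "0 < x \<Longrightarrow> h1 x powr p \<le> level powr p" "0 < x \<Longrightarrow> h1 x powr p \<le> h x powr p"
  using h1_bounds[of x] p by (auto intro!: powr_mono2)

lemma pow_integral_h1_le_below:
  assumes u: "0 \<le> u"
  shows "pow_integral p h1 0 u \<le> ennreal (level powr p * u)"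
proof -
  have "pow_integral p h1 0 u \<le> (\<integral>\<^sup>+ x. ennreal (level powr p) * indicator {0..u} x \<partial>lborel)"
    unfolding pow_integral_def
    using AE_lborel_singleton[of 0]
    by (intro nn_integral_mono_AE, eventually_elim) (auto simp: indicator_def h1_powr_le intro!: ennreal_leI)
  also have "\<dots> = ennreal (level powr p * u)" using u by (simp add: nn_integral_cmult_indicator ennreal_mult)
  finally show ?thesis .
qed

lemma pow_integral_h1_le_above:
  assumes u: "\<phi> \<le> u"
  shows "pow_integral p h1 0 u \<le> ennreal (level powr p * \<phi>) + pow_integral p h \<phi> u"
proof -
  have "pow_integral p h1 0 u \<le> (\<integral>\<^sup>+ x. ennreal (level powr p) * indicator {0..\<phi>} x
      + ennreal (h x powr p) * indicator {\<phi>..u} x \<partial>lborel)"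
    unfolding pow_integral_def
  proof (rule nn_integral_mono_AE)
    show "AE x in lborel. ennreal (h1 x powr p) * indicator {0..u} x
        \<le> ennreal (level powr p) * indicator {0..\<phi>} x + ennreal (h x powr p) * indicator {\<phi>..u} x"
      using AE_lborel_singleton[of 0]
    proof eventually_elim
      case (elim x)
      show ?case
      proof (cases "x \<in> {0..u}")
        case True
        with elim have "0 < x" by auto
        then show ?thesis using True h1_powr_le
          by (cases "x \<le> \<phi>") (auto simp: indicator_def intro!: ennreal_leI add_increasing add_increasing2)
      qed simp
    qed
  qed
  also have "\<dots> = ennreal (level powr p * \<phi>) + pow_integral p h \<phi> u"
    unfolding pow_integral_def using phi_bounds by (simp add: nn_integral_add nn_integral_cmult_indicator ennreal_mult)
  finally show ?thesis .
qed

lemma small_integrand_h1_le_below: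
  assumes u: "0 < u" "u < \<phi>"
  shows "log_density p u * enn_powr (pow_integral p h1 0 u) (1/p)
    \<le> ennreal (level * t powr (1/p)) * ennreal (u powr (1/p - 1))"
proof -
  have "enn_powr (pow_integral p h1 0 u) (1/p) \<le> enn_powr (ennreal (level powr p * u)) (1/p)"
    using u p by (intro enn_powr_mono pow_integral_h1_le_below) auto
  also have "\<dots> = ennreal (level * u powr (1/p))"
    using u level_nonneg p by (simp add: enn_powr_ennreal powr_mult powr_powr)
  finally have "log_density p u * enn_powr (pow_integral p h1 0 u) (1/p)
      \<le> log_density p u * ennreal (level * u powr (1/p))"
    by (rule mult_left_mono) simp
  also have "\<dots> = ennreal ((1 - ln u) powr (-1/p) / u * (level * u powr (1/p)))"
    unfolding log_density_def using u level_nonneg by (intro ennreal_mult[symmetric]) auto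
  also have "\<dots> \<le> ennreal (level * t powr (1/p) * u powr (1/p - 1))"
  proof (rule ennreal_leI)
    have "(1 - ln u) powr (-1/p) / u * (level * u powr (1/p))
        = level * (1 - ln u) powr (-1/p) * u powr (1/p - 1)"
      using u by (simp add: powr_diff)
    also have "\<dots> \<le> level * t powr (1/p) * u powr (1/p - 1)"
      using powr_one_minus_ln_le_of_le_phi1[OF t(1) u(1), of "1/p"] u p level_nonneg
      by (intro mult_right_mono mult_left_mono) auto
    finally show "(1 - ln u) powr (-1/p) / u * (level * u powr (1/p)) \<le> level * t powr (1/p) * u powr (1/p - 1)" .
  qed
  also have "\<dots> = ennreal (level * t powr (1/p)) * ennreal (u powr (1/p - 1))"
    using level_nonneg by (simp add: ennreal_mult)
  finally show ?thesis .
qed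

lemma root_pow_integral_h1_le_above:
  assumes "\<phi> \<le> u"
  shows "enn_powr (pow_integral p h1 0 u) (1/p)
    \<le> ennreal (level * \<phi> powr (1/p)) + enn_powr (pow_integral p h \<phi> u) (1/p)"
proof -
  have "enn_powr (pow_integral p h1 0 u) (1/p) \<le> enn_powr (ennreal (level powr p * \<phi>) + pow_integral p h \<phi> u) (1/p)"
    using assms p by (intro enn_powr_mono pow_integral_h1_le_above) auto
  also have "\<dots> \<le> enn_powr (ennreal (level powr p * \<phi>)) (1/p) + enn_powr (pow_integral p h \<phi> u) (1/p)"
    using p by (intro enn_powr_add_le) auto
  also have "enn_powr (ennreal (level powr p * \<phi>)) (1/p) = ennreal (level * \<phi> powr (1/p))"
    using phi_bounds level_nonneg p by (simp add: enn_powr_ennreal powr_mult powr_powr)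
  finally show ?thesis .
qed

lemma small_integrand_h1_le:
  "log_density p u * enn_powr (pow_integral p h1 0 u) (1/p) * indicator {0<..<1} u
    \<le> ennreal (level * t powr (1/p)) * (ennreal (u powr (1/p - 1)) * indicator {0..\<phi>} u)
      + (ennreal (level * \<phi> powr (1/p)) * (log_density p u * indicator {\<phi>..1} u)
      + log_density p u * enn_powr (pow_integral p h \<phi> u) (1/p) * indicator {\<phi>..1} u)"
proof (cases "0 < u \<and> u < \<phi>")
  case True
  with phi_bounds have "log_density p u * enn_powr (pow_integral p h1 0 u) (1/p) * indicator {0<..<1} u
      \<le> ennreal (level * t powr (1/p)) * (ennreal (u powr (1/p - 1)) * indicator {0..\<phi>} u)"
    using small_integrand_h1_le_below[of u] by (simp add: indicator_def)
  then show ?thesis by (rule order_trans) simp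
next
  case False
  show ?thesis
  proof (cases "u \<in> {0<..<1}")
    case True
    with False have "\<phi> \<le> u" by auto
    then have "log_density p u * enn_powr (pow_integral p h1 0 u) (1/p)
        \<le> log_density p u * (ennreal (level * \<phi> powr (1/p)) + enn_powr (pow_integral p h \<phi> u) (1/p))"
      using root_pow_integral_h1_le_above by (intro mult_left_mono) auto
    also have "\<dots> = ennreal (level * \<phi> powr (1/p)) * log_density p u
        + log_density p u * enn_powr (pow_integral p h \<phi> u) (1/p)"
      by (simp add: distrib_left mult.commute)
    finally show ?thesis using True \<open>\<phi> \<le> u\<close>
      by (auto simp: indicator_def intro!: add_increasing)
  qed simp
qed

lemma small_fun_h1_le:
  "small_fun p h1 \<le> ennreal (p * (level * (t * \<phi>) powr (1/p)))
    + ennreal (level * \<phi> powr (1/p)) * (\<integral>\<^sup>+ u\<in>{\<phi>..1}. log_density p u \<partial>lborel) + small_fun_from p h \<phi>"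
proof -
  have "small_fun p h1 \<le> (\<integral>\<^sup>+ u. ennreal (level * t powr (1/p)) * (ennreal (u powr (1/p - 1)) * indicator {0..\<phi>} u)
      + (ennreal (level * \<phi> powr (1/p)) * (log_density p u * indicator {\<phi>..1} u)
      + log_density p u * enn_powr (pow_integral p h \<phi> u) (1/p) * indicator {\<phi>..1} u) \<partial>lborel)"
    unfolding small_fun_def by (rule nn_integral_mono[OF small_integrand_h1_le])
  also have "\<dots> = ennreal (level * t powr (1/p)) * (\<integral>\<^sup>+ u\<in>{0..\<phi>}. ennreal (u powr (1/p - 1)) \<partial>lborel)
      + (ennreal (level * \<phi> powr (1/p)) * (\<integral>\<^sup>+ u\<in>{\<phi>..1}. log_density p u \<partial>lborel) + small_fun_from p h \<phi>)"
    unfolding small_fun_from_def by (simp add: nn_integral_add nn_integral_cmult)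
  also have "(\<integral>\<^sup>+ u\<in>{0..\<phi>}. ennreal (u powr (1/p - 1)) \<partial>lborel) = ennreal (p * \<phi> powr (1/p))"
    using nn_integral_powr_Icc_0[of "1/p" \<phi>] p phi_bounds by simp
  also have "ennreal (level * t powr (1/p)) * ennreal (p * \<phi> powr (1/p)) = ennreal (p * (level * (t * \<phi>) powr (1/p)))"
    using p t phi_bounds level_nonneg by (simp add: ennreal_mult[symmetric] powr_mult mult_ac)
  finally show ?thesis by (simp add: add.assoc)
qed

lemma t_mult_small_fun_h1_le:
  "ennreal t * small_fun p h1
    \<le> ennreal ((p + p/(p-1)) * (level * (t * \<phi>) powr (1/p))) + ennreal t * small_fun_from p h \<phi>"
proof -
  let ?X = "level * (t * \<phi>) powr (1/p)"
  have X: "0 \<le> ?X" using level_nonneg by simp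
  have "ennreal t * small_fun p h1 \<le> ennreal t * ennreal (p * ?X)
      + ennreal (level * \<phi> powr (1/p)) * (ennreal t * (\<integral>\<^sup>+ u\<in>{\<phi>..1}. log_density p u \<partial>lborel))
      + ennreal t * small_fun_from p h \<phi>"
    using mult_left_mono[OF small_fun_h1_le, of "ennreal t"] by (simp add: distrib_left mult_ac)
  also have "\<dots> \<le> ennreal (p * ?X) + ennreal (level * \<phi> powr (1/p)) * ennreal (p/(p-1) * t powr (1/p))
      + ennreal t * small_fun_from p h \<phi>"
  proof (intro add_mono mult_left_mono order_refl nn_integral_log_density_phi1_le[OF p t])
    show "ennreal t * ennreal (p * ?X) \<le> ennreal (p * ?X)"
      using t p X by (simp add: ennreal_mult[symmetric] mult_left_le_one_le ennreal_leI)
  qed auto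
  also have "ennreal (level * \<phi> powr (1/p)) * ennreal (p/(p-1) * t powr (1/p)) = ennreal (p/(p-1) * ?X)"
    using p t phi_bounds level_nonneg by (simp add: ennreal_mult[symmetric] powr_mult mult_ac)
  also have "ennreal (p * ?X) + ennreal (p/(p-1) * ?X) = ennreal ((p + p/(p-1)) * ?X)"
    using p X by (simp add: distrib_right)
  finally show ?thesis .
qed

lemma level_mult_powr_le_grand_fun_upto:
  "ennreal (level * (t * \<phi>) powr (1/p)) \<le> 4 * grand_fun_upto p h \<phi>"
proof -
  have "ennreal (level powr p * (\<phi>/2)) = ennreal (level powr p) * ennreal (\<phi>/2)"
    using phi_bounds by (intro ennreal_mult) auto
  also have "\<dots> = (\<integral>\<^sup>+ x\<in>{\<phi>/2..\<phi>}. ennreal (level powr p) \<partial>lborel)"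
    using phi_bounds by (simp add: nn_integral_cmult_indicator)
  also have "\<dots> \<le> pow_integral p h (\<phi>/2) \<phi>"
    unfolding pow_integral_def using phi_bounds antimono level_nonneg p
    by (intro nn_integral_mono) (auto simp: indicator_def intro!: ennreal_leI powr_mono2)
  finally have I: "ennreal (level powr p * (\<phi>/2)) \<le> pow_integral p h (\<phi>/2) \<phi>" .
  have R: "enn_powr (ennreal (level powr p * (\<phi>/2))) (1/p) = ennreal (level * (\<phi>/2) powr (1/p))"
    using powr_mult[of "level powr p" "\<phi>/2" "1/p"] phi_bounds level_nonneg p
    by (simp add: enn_powr_ennreal powr_powr)
  have "t powr (1/p) \<le> 2 * (1 - ln (\<phi>/2)) powr (-1/p)"
    using powr_le_twice_one_minus_ln_phi1_half[OF t, of "1/p"] p by simp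
  moreover have "\<phi> powr (1/p) \<le> 2 * (\<phi>/2) powr (1/p)"
  proof -
    have "2 powr (1/p) \<le> (2::real)" using p powr_mono[of "1/p" 1 "2::real"] by simp
    from mult_left_mono[OF this powr_ge_zero[of \<phi> "1/p"]]
    have "\<phi> powr (1/p) * 2 powr (1/p) \<le> 2 * \<phi> powr (1/p)" by (simp add: mult.commute)
    then show ?thesis using phi_bounds by (simp add: powr_divide le_divide_eq)
  qed
  ultimately have "t powr (1/p) * \<phi> powr (1/p) \<le> (2 * (1 - ln (\<phi>/2)) powr (-1/p)) * (2 * (\<phi>/2) powr (1/p))"
    by (intro mult_mono) auto
  then have "level * (t * \<phi>) powr (1/p) \<le> level * ((2 * (1 - ln (\<phi>/2)) powr (-1/p)) * (2 * (\<phi>/2) powr (1/p)))"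
    using t phi_bounds level_nonneg by (simp add: powr_mult mult_left_mono)
  then have "ennreal (level * (t * \<phi>) powr (1/p))
      \<le> ennreal (4 * ((1 - ln (\<phi>/2)) powr (-1/p) * (level * (\<phi>/2) powr (1/p))))"
    by (intro ennreal_leI) (simp add: mult_ac)
  also have "\<dots> = 4 * (log_weight p (\<phi>/2) * enn_powr (ennreal (level powr p * (\<phi>/2))) (1/p))"
    unfolding log_weight_def R using level_nonneg by (simp add: ennreal_mult)
  also have "\<dots> \<le> 4 * (log_weight p (\<phi>/2) * enn_powr (pow_integral p h (\<phi>/2) \<phi>) (1/p))"
    using p by (intro mult_left_mono enn_powr_mono I) auto
  also have "\<dots> \<le> 4 * grand_fun_upto p h \<phi>"
    using phi_bounds by (intro mult_left_mono grand_fun_upto_upper) auto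
  finally show ?thesis .
qed

lemma grand_fun_add_small_fun_le:
  "grand_fun p h0 + ennreal t * small_fun p h1
    \<le> ennreal (1 + 4 * (p + p/(p-1))) * (grand_fun_upto p h \<phi> + ennreal t * small_fun_from p h \<phi>)"
proof -
  let ?A = "grand_fun_upto p h \<phi>" and ?B = "ennreal t * small_fun_from p h \<phi>" and ?c = "p + p/(p-1)"
  have c: "0 \<le> ?c" using p by simp
  have "grand_fun p h0 + ennreal t * small_fun p h1 \<le> ?A + (ennreal ?c * ennreal (level * (t * \<phi>) powr (1/p)) + ?B)"
    using grand_fun_h0_le t_mult_small_fun_h1_le c level_nonneg
    by (intro add_mono) (auto simp: ennreal_mult)
  also have "\<dots> \<le> ?A + (ennreal ?c * (4 * ?A) + ?B)"
    by (intro add_mono mult_left_mono level_mult_powr_le_grand_fun_upto order_refl) simp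
  also have "\<dots> = (1 + 4 * ennreal ?c) * ?A + ?B" by (simp add: algebra_simps)
  also have "\<dots> \<le> (1 + 4 * ennreal ?c) * ?A + (1 + 4 * ennreal ?c) * ?B"
    by (intro add_left_mono) (simp add: distrib_right add_increasing2)
  also have "ennreal (4 * ?c) = 4 * ennreal ?c"
    using c by (subst ennreal_mult) auto
  then have "ennreal (1 + 4 * ?c) = 1 + 4 * ennreal ?c"
    using c by (subst ennreal_plus) auto
  ultimately show ?thesis by (simp add: distrib_left)
qed

end

section \<open>The K-functional\<close>

lemma abs_truncation:
  fixes z l :: real
  assumes "0 \<le> l"
  shows "\<bar>max (-l) (min l z)\<bar> = min \<bar>z\<bar> l" "\<bar>z - max (-l) (min l z)\<bar> = max 0 (\<bar>z\<bar> - l)"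
  using assms by (auto simp: abs_if max_def min_def)

context
  fixes \<Omega> :: "'a::euclidean_space set"
  assumes sets_\<Omega>: "\<Omega> \<in> sets lebesgue" and finite_\<Omega>: "emeasure lebesgue \<Omega> \<noteq> \<infinity>"
begin

lemma drearr_truncation_le:
  fixes f :: "'a \<Rightarrow> real"
  assumes f: "f \<in> borel_measurable lebesgue" and l: "0 \<le> l" and x: "0 < x"
  shows "drearr \<Omega> (\<lambda>z. max (-l) (min l (f z))) x \<le> min (drearr \<Omega> f x) l"
    and "drearr \<Omega> (\<lambda>z. f z - max (-l) (min l (f z))) x \<le> max 0 (drearr \<Omega> f x - l)"
  using l drearr_nonneg[OF sets_\<Omega> finite_\<Omega> f x]
  by (auto simp: abs_truncation[OF l] intro!: drearr_le_of_level_subset[OF sets_\<Omega> finite_\<Omega> f x])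

lemma Kfun_le_Krhs:
  fixes f :: "'a \<Rightarrow> real"
  assumes p: "1 < p" and t: "0 < t" "t < 1" and f: "f \<in> borel_measurable lebesgue"
  shows "Kfun p \<Omega> f t \<le> ennreal (1 + 4 * (p + p/(p-1))) * Krhs p \<Omega> f t"
proof (cases "Krhs p \<Omega> f t = \<infinity>")
  case True
  then show ?thesis using p by (simp add: ennreal_mult_top add_pos_nonneg)
next
  case False
  define l where "l = drearr \<Omega> f (phi1 t)"
  define g1 where "g1 z = max (-l) (min l (f z))" for z
  define g0 where "g0 z = f z - g1 z" for z
  have l: "0 \<le> l" unfolding l_def by (rule drearr_nonneg[OF sets_\<Omega> finite_\<Omega> f phi1_pos])
  have g1m: "g1 \<in> borel_measurable lebesgue" unfolding g1_def using f by measurable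
  have g0m: "g0 \<in> borel_measurable lebesgue" unfolding g0_def using f g1m by measurable
  interpret truncation_split p t "drearr \<Omega> f" "drearr \<Omega> g0" "drearr \<Omega> g1"
  proof
    fix x :: real assume x: "0 < x"
    show "0 \<le> drearr \<Omega> g0 x \<and> drearr \<Omega> g0 x \<le> max 0 (drearr \<Omega> f x - drearr \<Omega> f (phi1 t))"
      using drearr_nonneg[OF sets_\<Omega> finite_\<Omega> g0m x] drearr_truncation_le(2)[OF f l x]
      unfolding g0_def g1_def l_def by auto
    show "0 \<le> drearr \<Omega> g1 x \<and> drearr \<Omega> g1 x \<le> min (drearr \<Omega> f x) (drearr \<Omega> f (phi1 t))"
      using drearr_nonneg[OF sets_\<Omega> finite_\<Omega> g1m x] drearr_truncation_le(1)[OF f l x]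
      unfolding g1_def l_def by auto
  qed (use p t f drearr_nonneg[OF sets_\<Omega> finite_\<Omega> f] drearr_antimono[OF sets_\<Omega> finite_\<Omega> f]
    borel_measurable_drearr[OF sets_\<Omega> finite_\<Omega> f] in auto)
  have bound: "grand_norm p \<Omega> g0 + ennreal t * small_norm p \<Omega> g1 \<le> ennreal (1 + 4 * (p + p/(p-1))) * Krhs p \<Omega> f t"
    unfolding grand_norm_eq_grand_fun small_norm_eq_small_fun Krhs_eq by (rule grand_fun_add_small_fun_le)
  moreover have "ennreal (1 + 4 * (p + p/(p-1))) * Krhs p \<Omega> f t < \<infinity>"
    using False by (simp add: ennreal_mult_less_top less_top)
  ultimately have "grand_norm p \<Omega> g0 < \<infinity>" "small_norm p \<Omega> g1 < \<infinity>"
    using t by (auto simp: ennreal_mult_less_top less_top[symmetric] top_unique dest: le_less_trans[rotated])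
  then have "Kfun p \<Omega> f t \<le> grand_norm p \<Omega> g0 + ennreal t * small_norm p \<Omega> g1"
    unfolding Kfun_def by (intro INF_lower2[of "(g0, g1)"]) (auto simp: in_grand_def in_small_def g0_def g0m g1m)
  also note bound
  finally show ?thesis .
qed

lemma Krhs_le_Kfun:
  fixes f :: "'a \<Rightarrow> real"
  assumes p: "1 < p" and t: "0 < t" "t < 1" and f: "f \<in> borel_measurable lebesgue"
  defines "C \<equiv> 2 powr ((p+1)/p) * (2 + small_embed_const p + 2 * (p/(p-1)) + 1)"
  shows "Krhs p \<Omega> f t \<le> ennreal C * Kfun p \<Omega> f t"
proof -
  have "0 < p/(p-1)" using p by simp
  then have C: "0 < C" unfolding C_def using small_embed_const_pos[OF p] by (intro mult_pos_pos) auto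
  have "ennreal (1/C) * Krhs p \<Omega> f t \<le> grand_norm p \<Omega> g0 + ennreal t * small_norm p \<Omega> g1"
    if g0: "g0 \<in> borel_measurable lebesgue" and g1: "g1 \<in> borel_measurable lebesgue"
      and split: "\<forall>x\<in>\<Omega>. f x = g0 x + g1 x" for g0 g1
  proof -
    interpret rearrangement_split p t "drearr \<Omega> f" "drearr \<Omega> g0" "drearr \<Omega> g1"
    proof
      show "drearr \<Omega> f x \<le> drearr \<Omega> g0 (x/2) + drearr \<Omega> g1 (x/2)" if "0 < x" for x
        using drearr_add_le[OF sets_\<Omega> finite_\<Omega> g0 g1, of "x/2" "x/2" f] that split by auto
    qed (use p t f g0 g1 drearr_nonneg[OF sets_\<Omega> finite_\<Omega>] borel_measurable_drearr[OF sets_\<Omega> finite_\<Omega>] in auto)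
    have "Krhs p \<Omega> f t \<le> ennreal C * (grand_norm p \<Omega> g0 + ennreal t * small_norm p \<Omega> g1)"
      unfolding grand_norm_eq_grand_fun small_norm_eq_small_fun Krhs_eq C_def
      by (rule grand_fun_upto_add_small_fun_from_le)
    then have "ennreal (1/C) * Krhs p \<Omega> f t \<le> ennreal (1/C) * ennreal C * (grand_norm p \<Omega> g0 + ennreal t * small_norm p \<Omega> g1)"
      by (simp add: mult_left_mono mult.assoc)
    also have "ennreal (1/C) * ennreal C = 1" using C by (simp add: ennreal_mult[symmetric])
    finally show ?thesis by simp
  qed
  then have "ennreal (1/C) * Krhs p \<Omega> f t \<le> Kfun p \<Omega> f t"
    unfolding Kfun_def by (intro INF_greatest) (auto simp: in_grand_def in_small_def)
  then have "ennreal C * (ennreal (1/C) * Krhs p \<Omega> f t) \<le> ennreal C * Kfun p \<Omega> f t"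
    by (rule mult_left_mono) simp
  also have "ennreal C * (ennreal (1/C) * Krhs p \<Omega> f t) = Krhs p \<Omega> f t"
    using C by (simp add: mult.assoc[symmetric] ennreal_mult[symmetric])
  finally show ?thesis .
qed

end

text \<open>Nor is
  \<open>in_sum_space\<close> needed: if \<open>f\<close> is not in the sum space, both sides are infinite.\<close>

theorem theorem6p1:
  fixes p :: real and \<Omega> :: "'a::euclidean_space set"
  assumes "1 < p" and "bounded \<Omega>" and "open \<Omega>" and "emeasure lebesgue \<Omega> = 1"
  shows "\<exists>C::real. C > 0 \<and> (\<forall>f t. f \<in> borel_measurable lebesgue \<longrightarrow> in_sum_space p \<Omega> f \<longrightarrow>
           t \<in> {0<..<1} \<longrightarrow>
           Kfun p \<Omega> f t \<le> ennreal C * Krhs p \<Omega> f t \<and>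
           Krhs p \<Omega> f t \<le> ennreal C * Kfun p \<Omega> f t)"
proof -
  have sets: "\<Omega> \<in> sets lebesgue" using \<open>open \<Omega>\<close> by simp
  have finite: "emeasure lebesgue \<Omega> \<noteq> \<infinity>" using \<open>emeasure lebesgue \<Omega> = 1\<close> by simp
  define C where "C = max (1 + 4 * (p + p/(p-1))) (2 powr ((p+1)/p) * (2 + small_embed_const p + 2 * (p/(p-1)) + 1))"
  have "0 < 1 + 4 * (p + p/(p-1))" using \<open>1 < p\<close> by (intro add_pos_pos mult_pos_pos) auto
  then have "0 < C" unfolding C_def by (simp add: less_max_iff_disj)
  moreover have "Kfun p \<Omega> f t \<le> ennreal C * Krhs p \<Omega> f t \<and> Krhs p \<Omega> f t \<le> ennreal C * Kfun p \<Omega> f t"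
    if f: "f \<in> borel_measurable lebesgue" and t: "t \<in> {0<..<1}" for f t
  proof
    have "Kfun p \<Omega> f t \<le> ennreal (1 + 4 * (p + p/(p-1))) * Krhs p \<Omega> f t"
      using Kfun_le_Krhs[OF sets finite \<open>1 < p\<close> _ _ f] t by simp
    also have "\<dots> \<le> ennreal C * Krhs p \<Omega> f t" unfolding C_def by (intro mult_right_mono ennreal_leI) auto
    finally show "Kfun p \<Omega> f t \<le> ennreal C * Krhs p \<Omega> f t" .
    have "Krhs p \<Omega> f t \<le> ennreal (2 powr ((p+1)/p) * (2 + small_embed_const p + 2 * (p/(p-1)) + 1)) * Kfun p \<Omega> f t"
      using Krhs_le_Kfun[OF sets finite \<open>1 < p\<close> _ _ f] t by simp
    also have "\<dots> \<le> ennreal C * Kfun p \<Omega> f t" unfolding C_def by (intro mult_right_mono ennreal_leI) auto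
    finally show "Krhs p \<Omega> f t \<le> ennreal C * Kfun p \<Omega> f t" .
  qed
  ultimately show ?thesis by blast
qed

end
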